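(* Let $A\subset\mathbf{Z}_{\geq0}$ be finite with $0\in A$, $N=\#A\geq 2$, $A(x)=\sum_{a\in A}x^a$, and $\Omega=A+[0,1)$. Suppose that $A(x)$ has a spectrum and that the number of distinct complex numbers $x$ with $|x|=1$ and $A(x)=0$ is less than $\frac{3N}{2}-1$. Then $A\equiv\{0,1,\dots,N-1\}\pmod N$, $N\mathbf{Z}\oplus A=\mathbf{Z}$, and $N^{-1}\mathbf{Z}$ is a spectrum for $\Omega$.
   Context: A set $\{\theta_1,\dots,\theta_{N-1}\}\subset(0,1)$ is called a spectrum for $A(x)$ if the $\theta_j$ are pairwise distinct and, with $\theta_0=0$, $A(e^{2\pi i(\theta_i-\theta_j)})=0$ for all $0\leq i,j\leq N-1$ with $i\neq j$. A set $\Lambda\subset\mathbf{R}$ is a spectrum for $\Omega$ if $\{e^{2\pi i\lambda x}\}_{\lambda\in\Lambda}$ is an orthogonal basis of $L^2(\Omega)$. $N\mathbf{Z}\oplus A=\mathbf{Z}$ means every integer is uniquely of the form $a+Nk$, $a\in A$, $k\in\mathbf{Z}$. *)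

theory Defs
  imports "HOL-Analysis.Analysis"
begin

definition gen_poly :: "nat set \<Rightarrow> complex \<Rightarrow> complex" where
  "gen_poly A x = (\<Sum>a\<in>A. x ^ a)"

definition poly_has_spectrum :: "nat set \<Rightarrow> nat \<Rightarrow> bool" where
  "poly_has_spectrum A N \<longleftrightarrow>
     (\<exists>\<theta> :: nat \<Rightarrow> real.
        \<theta> 0 = 0 \<and>
        (\<forall>j\<in>{1..<N}. 0 < \<theta> j \<and> \<theta> j < 1) \<and>
        inj_on \<theta> {1..<N} \<and>
        (\<forall>i<N. \<forall>j<N. i \<noteq> j \<longrightarrow>
            gen_poly A (exp (2 * pi * \<i> * complex_of_real (\<theta> i - \<theta> j))) = 0))"

definition expo :: "real \<Rightarrow> real \<Rightarrow> complex" where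
  "expo l x = exp (2 * pi * \<i> * complex_of_real (l * x))"

definition L2_on :: "real set \<Rightarrow> (real \<Rightarrow> complex) \<Rightarrow> bool" where
  "L2_on \<Omega> f \<longleftrightarrow> f \<in> borel_measurable (lebesgue_on \<Omega>) \<and>
                   integrable (lebesgue_on \<Omega>) (\<lambda>x. (cmod (f x))\<^sup>2)"

definition L2_inner :: "real set \<Rightarrow> (real \<Rightarrow> complex) \<Rightarrow> (real \<Rightarrow> complex) \<Rightarrow> complex" where
  "L2_inner \<Omega> f g = integral\<^sup>L (lebesgue_on \<Omega>) (\<lambda>x. f x * cnj (g x))"

text \<open>Lambda is a spectrum for Omega: the exponentials e_lambda (lambda in Lambda) form an
  orthogonal basis of L^2(Omega), i.e. they are nonzero elements of L^2(Omega), pairwise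
  orthogonal, and complete (only the zero element is orthogonal to all of them).\<close>
definition spectrum_of :: "real set \<Rightarrow> real set \<Rightarrow> bool" where
  "spectrum_of \<Omega> \<Lambda> \<longleftrightarrow>
     (\<forall>l\<in>\<Lambda>. L2_on \<Omega> (expo l) \<and> \<not> (AE x in lebesgue_on \<Omega>. expo l x = 0)) \<and>
     (\<forall>l\<in>\<Lambda>. \<forall>m\<in>\<Lambda>. l \<noteq> m \<longrightarrow> L2_inner \<Omega> (expo l) (expo m) = 0) \<and>
     (\<forall>f. L2_on \<Omega> f \<and> (\<forall>l\<in>\<Lambda>. L2_inner \<Omega> f (expo l) = 0)
            \<longrightarrow> (AE x in lebesgue_on \<Omega>. f x = 0))"

end

(* The spectrum yields N points e(theta_j) = exp(2 pi i theta_j) on the unit circle whose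
   pairwise ratios are zeros of A(x), so their ratio set S has fewer than 3N/2 elements.
   A Freiman-type argument shows that a finite set T with |T/T| < 3|T|/2 has T/T closed under
   division, so S is the group of M-th roots of unity for some M >= N, and A vanishes on it
   away from 1. Averaging z^(M-r) A(z) over this group counts the elements of A in each
   residue class modulo M and forces M = N with exactly one element per class; tiling
   follows at once.

   The exponentials e(kx/N) are orthogonal on Omega by a geometric sum. For completeness,
   Omega is a fundamental domain for translation by NZ, so a function orthogonal to every
   e(kx/N) integrates to zero against every continuous function of e(x/N) (Stone-Weierstrass),
   hence against indicators of closed subsets of the circle, hence of closed subsets of the
   line, and therefore vanishes almost everywhere. *)

theory Submission
  imports Defs
begin

definition e2pi :: "real \<Rightarrow> complex" where
  "e2pi t = exp (2 * pi * \<i> * complex_of_real t)"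

lemma e2pi_add: "e2pi (s + t) = e2pi s * e2pi t"
  unfolding e2pi_def by (simp add: distrib_left exp_add[symmetric])

lemma e2pi_diff: "e2pi (s - t) = e2pi s / e2pi t"
  unfolding e2pi_def by (simp add: right_diff_distrib exp_diff[symmetric])

lemma e2pi_nonzero [simp]: "e2pi t \<noteq> 0"
  unfolding e2pi_def by simp

lemma norm_e2pi [simp]: "norm (e2pi t) = 1"
  unfolding e2pi_def by (simp add: norm_exp_eq_Re)

lemma e2pi_0 [simp]: "e2pi 0 = 1"
  unfolding e2pi_def by simp

lemma cnj_e2pi: "cnj (e2pi t) = e2pi (- t)"
  unfolding e2pi_def exp_cnj by simp

lemma e2pi_of_nat_mult: "e2pi (real n * t) = e2pi t ^ n"
  unfolding e2pi_def by (simp add: exp_of_nat_mult[symmetric] algebra_simps)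

lemma e2pi_eq_1_iff: "e2pi t = 1 \<longleftrightarrow> t \<in> \<int>"
proof -
  have "e2pi t = 1 \<longleftrightarrow> (\<exists>n::int. 2 * pi * t = real_of_int (2 * n) * pi)"
    unfolding e2pi_def exp_eq_1 by simp
  also have "\<dots> \<longleftrightarrow> (\<exists>n::int. t = of_int n)"
    by (auto simp: algebra_simps)
  finally show ?thesis by (auto elim: Ints_cases)
qed

lemma e2pi_eq_iff: "e2pi s = e2pi t \<longleftrightarrow> s - t \<in> \<int>"
  using e2pi_eq_1_iff[of "s - t"] by (simp add: e2pi_diff)

lemma inj_on_e2pi: "inj_on e2pi {0..<1}"
proof (rule inj_onI)
  fix s t assume "s \<in> {0..<1}" "t \<in> {0..<1}" "e2pi s = e2pi t"
  then obtain n :: int where n: "s - t = of_int n" "\<bar>s - t\<bar> < 1"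
    by (auto simp: e2pi_eq_iff elim!: Ints_cases)
  then have "n = 0" by (metis of_int_abs of_int_less_1_iff abs_less_iff zabs_less_one_iff)
  with n show "s = t" by simp
qed

lemma continuous_on_e2pi [continuous_intros]:
  "continuous_on S g \<Longrightarrow> continuous_on S (\<lambda>x. e2pi (g x))"
  unfolding e2pi_def by (intro continuous_intros)

lemma expo_eq_e2pi: "expo l x = e2pi (l * x)"
  unfolding expo_def e2pi_def ..

section \<open>Small ratio sets are groups of roots of unity\<close>

definition ratio_set :: "'a::field set \<Rightarrow> 'a set" where
  "ratio_set T = {x / y | x y. x \<in> T \<and> y \<in> T}"

lemma finite_ratio_set: "finite T \<Longrightarrow> finite (ratio_set T)"
proof -
  have "ratio_set T = (\<lambda>(x, y). x / y) ` (T \<times> T)"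
    unfolding ratio_set_def by auto
  then show "finite T \<Longrightarrow> finite (ratio_set T)" by simp
qed

lemma subset_ratio_set: "1 \<in> T \<Longrightarrow> T \<subseteq> ratio_set T"
  unfolding ratio_set_def by force

lemma zero_notin_ratio_set: "0 \<notin> T \<Longrightarrow> 0 \<notin> ratio_set T"
  unfolding ratio_set_def by auto

text \<open>If x = a / b, the translates T / b and T / a lie in the ratio set; when it is small they
  share more than half of T, and each common element c gives c a \<in> T with (c a) / x = c b \<in> T.\<close>
lemma card_ratio_representations:
  fixes T :: "'a::field set"
  assumes "finite T" "0 \<notin> T" "2 * card (ratio_set T) < 3 * card T" "x \<in> ratio_set T"
  shows "card T < 2 * card {t \<in> T. t / x \<in> T}"
proof -
  obtain a b where ab: "a \<in> T" "b \<in> T" "x = a / b"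
    using assms(4) unfolding ratio_set_def by auto
  have "a \<noteq> 0" "b \<noteq> 0" using ab assms(2) by auto
  define X where "X = (\<lambda>t. t / b) ` T"
  define Y where "Y = (\<lambda>t. t / a) ` T"
  have XY: "X \<subseteq> ratio_set T" "Y \<subseteq> ratio_set T"
    unfolding X_def Y_def ratio_set_def using ab by auto
  have "card X = card T" "card Y = card T"
    unfolding X_def Y_def using \<open>a \<noteq> 0\<close> \<open>b \<noteq> 0\<close> by (auto intro!: card_image simp: inj_on_def)
  moreover have "card (X \<union> Y) \<le> card (ratio_set T)"
    using XY by (intro card_mono finite_ratio_set assms(1)) auto
  moreover have "card (X \<union> Y) + card (X \<inter> Y) = card X + card Y"
    using XY finite_subset[OF _ finite_ratio_set[OF assms(1)]] by (intro card_Un_Int[symmetric]) auto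
  ultimately have "card T < 2 * card (X \<inter> Y)" using assms(3) by linarith
  also have "card (X \<inter> Y) = card ((\<lambda>c. c * a) ` (X \<inter> Y))"
    using \<open>a \<noteq> 0\<close> by (intro card_image[symmetric]) (auto simp: inj_on_def)
  also have "\<dots> \<le> card {t \<in> T. t / x \<in> T}"
  proof (intro card_mono subsetI)
    fix s assume "s \<in> (\<lambda>c. c * a) ` (X \<inter> Y)"
    then obtain t t' where "t \<in> T" "t' \<in> T" "s = t' / a * a" "t / b = t' / a"
      unfolding X_def Y_def by auto
    then have "s = t'" "s / x = t" using \<open>a \<noteq> 0\<close> \<open>b \<noteq> 0\<close> by (auto simp: ab(3) field_simps)
    with \<open>t \<in> T\<close> \<open>t' \<in> T\<close> show "s \<in> {t \<in> T. t / x \<in> T}" by simp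
  qed (use assms(1) in simp)
  finally show ?thesis by simp
qed

lemma ratio_set_div_closed:
  fixes T :: "'a::field set"
  assumes "finite T" "0 \<notin> T" "2 * card (ratio_set T) < 3 * card T"
    and "x \<in> ratio_set T" "y \<in> ratio_set T"
  shows "x / y \<in> ratio_set T"
proof -
  define P where "P u = {t \<in> T. t / u \<in> T}" for u
  have "P x \<inter> P y \<noteq> {}"
  proof
    assume "P x \<inter> P y = {}"
    then have "card (P x) + card (P y) \<le> card T"
      using assms(1) by (subst card_Un_disjoint[symmetric]) (auto intro!: card_mono simp: P_def)
    then show False
      using card_ratio_representations[OF assms(1-3) assms(4)]
        card_ratio_representations[OF assms(1-3) assms(5)] unfolding P_def by linarith
  qed
  then obtain z where z: "z \<in> T" "z / x \<in> T" "z / y \<in> T" unfolding P_def by auto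
  then have "z \<noteq> 0" "x \<noteq> 0" using assms(2) by auto
  then have "x / y = (z / y) / (z / x)" by (simp add: field_simps)
  with z show ?thesis unfolding ratio_set_def by blast
qed

text \<open>Multiplication by x permutes S; comparing the products of all elements gives
  x ^ card S = 1.\<close>
lemma div_closed_eq_roots_unity:
  fixes S :: "complex set"
  assumes fin: "finite S" and "1 \<in> S" "0 \<notin> S"
    and closed: "\<And>x y. x \<in> S \<Longrightarrow> y \<in> S \<Longrightarrow> x / y \<in> S"
  shows "S = {z. z ^ card S = 1}"
proof -
  have mult_closed: "x * y \<in> S" if "x \<in> S" "y \<in> S" for x y
    using closed[OF that(1) closed[OF \<open>1 \<in> S\<close> that(2)]] by simp
  have root: "x ^ card S = 1" if "x \<in> S" for x
  proof -
    have "x \<noteq> 0" using that \<open>0 \<notin> S\<close> by auto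
    then have inj: "inj_on ((*) x) S" by (auto simp: inj_on_def)
    have "(*) x ` S = S"
      using fin inj mult_closed[OF that] by (intro card_subset_eq) (auto simp: card_image)
    then have "prod id S = prod id ((*) x ` S)" by simp
    also have "\<dots> = x ^ card S * prod id S" using inj by (simp add: prod.reindex prod.distrib)
    finally show ?thesis using fin \<open>0 \<notin> S\<close> by (auto simp: prod_zero_iff)
  qed
  have "card S > 0" using fin \<open>1 \<in> S\<close> by (auto simp: card_gt_0_iff)
  then show ?thesis
    using root card_roots_unity_eq finite_roots_unity[of "card S"]
    by (intro card_subset_eq) auto
qed

lemma sum_roots_unity_power:
  assumes "M > 0"
  shows "(\<Sum>z | z ^ M = 1. z ^ k) = (if M dvd k then of_nat M else (0::complex))"
proof (cases "M dvd k")
  case True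
  have "(\<Sum>z::complex | z ^ M = 1. z ^ k) = (\<Sum>z::complex | z ^ M = 1. 1)"
    by (intro sum.cong refl) (use True in \<open>auto simp: power_mult elim!: dvdE\<close>)
  then show ?thesis using True card_roots_unity_eq[OF assms] by simp
next
  case False
  define w where "w = cis (2 * pi * real k / real M)"
  have "w ^ M = cis (real M * (2 * pi * real k / real M))"
    unfolding w_def by (rule Complex.DeMoivre)
  also have "\<dots> = cis (2 * pi * real k)"
    using assms by simp
  also have "\<dots> = 1"
    by (rule cis_multiple_2pi) simp
  finally have "w ^ M = 1" .
  have "w \<noteq> 1"
  proof
    assume "w = 1"
    then obtain m :: int where "2 * pi * real k / real M = 2 * pi * of_int m"
      by (auto simp: w_def complex_eq_iff cos_one_2pi_int)
    then have "real k = real M * of_int m" using assms by (simp add: field_simps)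
    then have "int k = int M * m" by (metis of_int_eq_iff of_int_mult of_int_of_nat_eq)
    then show False using False by (metis dvd_triv_left int_dvd_int_iff)
  qed
  have "(\<Sum>z | z ^ M = 1. z ^ k) = (\<Sum>j<M. cis (2 * pi * real j / real M) ^ k)"
    using assms by (intro sum.reindex_bij_betw[symmetric] Complex.bij_betw_roots_unity)
  also have "\<dots> = (\<Sum>j<M. w ^ j)"
    by (intro sum.cong) (auto simp: w_def Complex.DeMoivre mult_ac)
  also have "\<dots> = 0"
    using \<open>w \<noteq> 1\<close> \<open>w ^ M = 1\<close> by (simp add: geometric_sum)
  finally show ?thesis using False by simp
qed

lemma finite_gen_poly_roots:
  assumes "finite A" "0 \<in> A"
  shows "finite {x. gen_poly A x = 0}"
proof -
  define p :: "complex poly" where "p = (\<Sum>a\<in>A. monom 1 a)"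
  have "poly p = gen_poly A"
    unfolding p_def gen_poly_def by (simp add: fun_eq_iff poly_sum poly_monom)
  moreover have "coeff p 0 = 1"
    using assms unfolding p_def by (simp add: coeff_sum coeff_monom sum.delta)
  then have "p \<noteq> 0" by auto
  ultimately show ?thesis using poly_roots_finite[of p] by simp
qed

text \<open>Sum A(z) z ^ (M - r) over all M-th roots of unity: on the left only z = 1 contributes, on
  the right exactly the exponents a \<equiv> r (mod M) survive.\<close>
lemma card_residue_class_if_roots_unity_zeros:
  assumes "finite A" "M > 0" "r < M"
    and zeros: "\<And>z. z ^ M = 1 \<Longrightarrow> z \<noteq> 1 \<Longrightarrow> gen_poly A z = 0"
  shows "card A = M * card {a \<in> A. a mod M = r}"
proof -
  have "of_nat (card A) = (\<Sum>z | z ^ M = 1. gen_poly A z * z ^ (M - r))"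
    using finite_roots_unity[of M] \<open>M > 0\<close> zeros
    by (subst sum.remove[of _ 1]) (auto simp: gen_poly_def)
  also have "\<dots> = (\<Sum>a\<in>A. \<Sum>z | z ^ M = 1. z ^ (a + (M - r)))"
    unfolding gen_poly_def
    by (subst sum.swap) (simp add: sum_distrib_right power_add)
  also have "\<dots> = (\<Sum>a\<in>A. if a mod M = r then of_nat M else 0)"
  proof (intro sum.cong refl)
    fix a
    have "M dvd a + (M - r) \<longleftrightarrow> M dvd a + M - r" using \<open>r < M\<close> by simp
    also have "\<dots> \<longleftrightarrow> a mod M = r"
      using \<open>r < M\<close> by (metis add_diff_assoc2 dvd_minus_mod less_imp_le_nat mod_add_self2
          mod_if mod_nat_eqI diff_add_zero diff_is_0_eq le_diff_conv)
    finally show "(\<Sum>z::complex | z ^ M = 1. z ^ (a + (M - r))) = (if a mod M = r then of_nat M else 0)"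
      using sum_roots_unity_power[OF \<open>M > 0\<close>] by simp
  qed
  also have "\<dots> = of_nat (M * card {a \<in> A. a mod M = r})"
    using \<open>finite A\<close> by (simp add: sum.If_cases Int_def conj_commute)
  finally show ?thesis by (simp only: of_nat_eq_iff)
qed

section \<open>Complete residues and tiling\<close>

lemma poly_has_spectrum_points:
  assumes "poly_has_spectrum A N" "N > 0"
  obtains T where "card T = N" "1 \<in> T" "T \<subseteq> sphere 0 1"
    "\<And>x y. x \<in> T \<Longrightarrow> y \<in> T \<Longrightarrow> x \<noteq> y \<Longrightarrow> gen_poly A (x / y) = 0"
proof -
  obtain \<theta> where \<theta>0: "\<theta> 0 = 0" and \<theta>01: "\<forall>j\<in>{1..<N}. 0 < \<theta> j \<and> \<theta> j < 1"
    and inj: "inj_on \<theta> {1..<N}"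
    and zeros: "\<forall>i<N. \<forall>j<N. i \<noteq> j \<longrightarrow>
                  gen_poly A (exp (2 * pi * \<i> * complex_of_real (\<theta> i - \<theta> j))) = 0"
    using assms unfolding poly_has_spectrum_def by blast
  have "\<theta> j \<in> {0..<1}" if "j < N" for j
    using \<theta>0 \<theta>01[rule_format, of j] that by (cases "j = 0") auto
  then have range: "\<theta> ` {..<N} \<subseteq> {0..<1}" by auto
  have "0 \<notin> \<theta> ` {1..<N}" using \<theta>01 by (auto simp: less_irrefl)
  then have "inj_on \<theta> (insert 0 {1..<N})" using inj \<theta>0 by simp
  then have "inj_on \<theta> {..<N}" by (rule inj_on_subset) auto
  then have inj_e: "inj_on (\<lambda>j. e2pi (\<theta> j)) {..<N}"
    using comp_inj_on[OF _ inj_on_subset[OF inj_on_e2pi range]] by (simp add: comp_def)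
  show thesis
  proof
    show "card ((\<lambda>j. e2pi (\<theta> j)) ` {..<N}) = N"
      using inj_e by (simp add: card_image)
    show "1 \<in> (\<lambda>j. e2pi (\<theta> j)) ` {..<N}"
      using \<theta>0 \<open>N > 0\<close> by (auto intro!: image_eqI[of _ _ 0])
    show "(\<lambda>j. e2pi (\<theta> j)) ` {..<N} \<subseteq> sphere 0 1"
      by auto
    fix x y assume "x \<in> (\<lambda>j. e2pi (\<theta> j)) ` {..<N}" "y \<in> (\<lambda>j. e2pi (\<theta> j)) ` {..<N}" "x \<noteq> y"
    then obtain i j where "i < N" "j < N" "i \<noteq> j" "x / y = e2pi (\<theta> i - \<theta> j)"
      by (auto simp: e2pi_diff)
    then show "gen_poly A (x / y) = 0"
      using zeros by (simp add: e2pi_def)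
  qed
qed

lemma ratio_set_eq_roots_unity:
  fixes T :: "complex set"
  assumes "finite T" "1 \<in> T" "0 \<notin> T" "2 * card (ratio_set T) < 3 * card T"
  shows "ratio_set T = {z. z ^ card (ratio_set T) = 1}"
proof (rule div_closed_eq_roots_unity)
  show "finite (ratio_set T)" "0 \<notin> ratio_set T"
    using assms by (simp_all add: finite_ratio_set zero_notin_ratio_set)
  show "1 \<in> ratio_set T"
    using assms(2) subset_ratio_set by blast
  show "x / y \<in> ratio_set T" if "x \<in> ratio_set T" "y \<in> ratio_set T" for x y
    using assms(1,3,4) that by (rule ratio_set_div_closed)
qed

lemma card_ratio_set_le_card_roots:
  assumes "finite A" "0 \<in> A" "finite T" "1 \<in> T" "T \<subseteq> sphere 0 1"
    and zeros: "\<And>x y. x \<in> T \<Longrightarrow> y \<in> T \<Longrightarrow> x \<noteq> y \<Longrightarrow> gen_poly A (x / y) = 0"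
  shows "card (ratio_set T) \<le> card {x. cmod x = 1 \<and> gen_poly A x = 0} + 1"
proof -
  define Z where "Z = {x. cmod x = 1 \<and> gen_poly A x = 0}"
  have "0 \<notin> T" using assms(5) by auto
  have "ratio_set T - {1} \<subseteq> Z"
  proof
    fix s assume "s \<in> ratio_set T - {1}"
    then obtain x y where "x \<in> T" "y \<in> T" "s = x / y" "x \<noteq> y"
      unfolding ratio_set_def using \<open>0 \<notin> T\<close> by auto
    moreover from \<open>x \<in> T\<close> \<open>y \<in> T\<close> have "norm x = 1" "norm y = 1"
      using assms(5) by auto
    ultimately show "s \<in> Z"
      unfolding Z_def using zeros by (simp add: norm_divide)
  qed
  moreover have "finite Z"
    unfolding Z_def using finite_gen_poly_roots[OF assms(1,2)] by (rule finite_subset[rotated]) auto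
  ultimately have "card (ratio_set T - {1}) \<le> card Z" by (rule card_mono[rotated])
  moreover have "1 \<in> ratio_set T" "finite (ratio_set T)"
    using subset_ratio_set[OF assms(4)] assms(4) finite_ratio_set[OF assms(3)] by auto
  ultimately show ?thesis
    unfolding Z_def by (simp add: card_Diff_singleton)
qed

lemma residues_complete_if_roots_unity_zeros:
  assumes "finite A" "0 \<in> A" "card A \<le> M"
    and zeros: "\<And>z. z ^ M = 1 \<Longrightarrow> z \<noteq> 1 \<Longrightarrow> gen_poly A z = 0"
  shows "M = card A" "(\<lambda>a. a mod M) ` A = {0..<M}"
proof -
  have "card A > 0" using assms(1,2) by (auto simp: card_gt_0_iff)
  with assms(3) have "M > 0" by simp
  have count: "card A = M * card {a \<in> A. a mod M = r}" if "r < M" for r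
    using card_residue_class_if_roots_unity_zeros[OF assms(1) \<open>M > 0\<close> that zeros] .
  have "1 \<le> card {a \<in> A. a mod M = 0}"
    using assms(1,2) by (auto simp: Suc_le_eq card_gt_0_iff)
  then have "M \<le> card A"
    using count[OF \<open>M > 0\<close>] mult_le_mono2[of 1 _ M] by simp
  with assms(3) show "M = card A" by simp
  then have card_1: "card {a \<in> A. a mod M = r} = 1" if "r < M" for r
    using count[OF that] \<open>M > 0\<close> by simp
  then have "r \<in> (\<lambda>a. a mod M) ` A" if r: "r < M" for r
  proof -
    obtain a where "{a \<in> A. a mod M = r} = {a}"
      using card_1_singletonE[OF card_1[OF r]] by blast
    then show ?thesis by (auto intro: image_eqI[of _ _ a])
  qed
  moreover have "(\<lambda>a. a mod M) ` A \<subseteq> {0..<M}"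
    using \<open>M > 0\<close> by auto
  ultimately show "(\<lambda>a. a mod M) ` A = {0..<M}" by auto
qed

lemma residues_complete_if_few_unimodular_roots:
  assumes "finite A" "0 \<in> A" "N = card A" "N \<ge> 2" "poly_has_spectrum A N"
    and few_roots: "real (card {x. cmod x = 1 \<and> gen_poly A x = 0}) < 3 * real N / 2 - 1"
  shows "(\<lambda>a. a mod N) ` A = {0..<N}"
proof -
  have "N > 0" using \<open>N \<ge> 2\<close> by simp
  obtain T where T: "card T = N" "1 \<in> T" "T \<subseteq> sphere 0 1"
    and T_zeros: "\<And>x y. x \<in> T \<Longrightarrow> y \<in> T \<Longrightarrow> x \<noteq> y \<Longrightarrow> gen_poly A (x / y) = 0"
    using poly_has_spectrum_points[OF assms(5) \<open>N > 0\<close>] by blast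
  have "finite T" using T(1) \<open>N \<ge> 2\<close> by (simp add: card_ge_0_finite)
  have "0 \<notin> T" using T(3) by auto
  define M where "M = card (ratio_set T)"
  have "real M \<le> real (card {x. cmod x = 1 \<and> gen_poly A x = 0}) + 1"
    unfolding M_def using card_ratio_set_le_card_roots[OF assms(1,2) \<open>finite T\<close> T(2,3) T_zeros] by linarith
  then have "2 * M < 3 * card T"
    using few_roots T(1) by linarith
  from ratio_set_eq_roots_unity[OF \<open>finite T\<close> T(2) \<open>0 \<notin> T\<close> this[unfolded M_def]]
  have roots: "ratio_set T = {z. z ^ M = 1}"
    unfolding M_def .
  have card_le: "card A \<le> M"
    unfolding M_def using card_mono[OF finite_ratio_set[OF \<open>finite T\<close>] subset_ratio_set[OF T(2)]]
      T(1) assms(3) by simp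
  have zeros: "gen_poly A z = 0" if "z ^ M = 1" "z \<noteq> 1" for z
  proof -
    from that(1) roots have "z \<in> ratio_set T" by simp
    then obtain x y where "x \<in> T" "y \<in> T" "z = x / y"
      unfolding ratio_set_def by auto
    moreover from this \<open>z \<noteq> 1\<close> \<open>0 \<notin> T\<close> have "x \<noteq> y" by auto
    ultimately show ?thesis using T_zeros by simp
  qed
  show ?thesis
    using residues_complete_if_roots_unity_zeros[OF assms(1,2) card_le zeros] assms(3) by simp
qed

lemma bij_betw_mod_if_residues_complete:
  assumes "finite A" "N = card A" "(\<lambda>a. a mod N) ` A = {0..<N}"
  shows "bij_betw (\<lambda>a. a mod N) A {..<N}"
  using assms by (auto simp: bij_betw_def atLeast0LessThan intro!: eq_card_imp_inj_on)

lemma tiling_if_complete_residues: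
  assumes "N > 0" "bij_betw (\<lambda>a. a mod N) A {..<N}"
  shows "\<exists>!p::int \<times> int. fst p \<in> int ` A \<and> z = fst p + int N * snd p"
proof -
  have "nat (z mod int N) \<in> (\<lambda>a. a mod N) ` A"
    using assms by (simp add: bij_betw_imp_surj_on nat_less_iff)
  then obtain a where "a \<in> A" "a mod N = nat (z mod int N)" by auto
  then have a: "a \<in> A" "int (a mod N) = z mod int N" using assms(1) by auto
  define k where "k = (z - int a) div int N"
  have "z = int a + int N * k"
    using a(2) unfolding k_def by (simp add: of_nat_mod mod_eq_dvd_iff[symmetric] mod_diff_eq)
  show ?thesis
  proof (rule ex1I[of _ "(int a, k)"])
    show "fst (int a, k) \<in> int ` A \<and> z = fst (int a, k) + int N * snd (int a, k)"
      using a(1) \<open>z = int a + int N * k\<close> by simp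
  next
    fix p :: "int \<times> int" assume p: "fst p \<in> int ` A \<and> z = fst p + int N * snd p"
    then obtain b where "b \<in> A" "fst p = int b" by auto
    then have "int (b mod N) = int (a mod N)"
      using p a(2) by (simp add: of_nat_mod)
    then have "b = a"
      using inj_onD[OF bij_betw_imp_inj_on[OF assms(2)]] \<open>b \<in> A\<close> a(1) by simp
    then show "p = (int a, k)"
      using p \<open>fst p = int b\<close> \<open>z = int a + int N * k\<close> \<open>N > 0\<close> by (auto simp: prod_eq_iff)
  qed
qed

section \<open>Functions orthogonal to all e(k x / p)\<close>

lemma integrable_scaleR_bounded:
  fixes F :: "'a \<Rightarrow> 'b::{banach, second_countable_topology}"
  assumes "integrable M F" "g \<in> borel_measurable M" "\<And>x. \<bar>g x\<bar> \<le> B"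
  shows "integrable M (\<lambda>x. g x *\<^sub>R F x)"
proof (rule Bochner_Integration.integrable_bound)
  show "integrable M (\<lambda>x. B *\<^sub>R F x)" using assms(1) by simp
  show "AE x in M. norm (g x *\<^sub>R F x) \<le> norm (B *\<^sub>R F x)"
    using assms(3) by (intro AE_I2) (auto intro!: mult_right_mono order_trans[OF _ abs_ge_self])
qed (use assms(1,2) in measurable)

lemma integrable_if_square_integrable:
  fixes f :: "'a \<Rightarrow> 'b::{banach, second_countable_topology}"
  assumes "finite_measure M" "f \<in> borel_measurable M" "integrable M (\<lambda>x. (norm (f x))\<^sup>2)"
  shows "integrable M f"
proof (rule Bochner_Integration.integrable_bound)
  show "integrable M (\<lambda>x. 1 + (norm (f x))\<^sup>2)"
    by (rule Bochner_Integration.integrable_add[OF finite_measure.integrable_const[OF assms(1)] assms(3)])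
  have "t \<le> 1 + t\<^sup>2" for t :: real
    using zero_le_power2[of "t - 1/2"] by (simp add: power2_eq_square algebra_simps)
  then show "AE x in M. norm (f x) \<le> norm (1 + (norm (f x))\<^sup>2)"
    by simp
qed (use assms(2) in simp)

lemma borel_measurable_lebesgue_if_continuous:
  "continuous_on UNIV f \<Longrightarrow> f \<in> borel_measurable lebesgue"
  using continuous_imp_measurable_on_sets_lebesgue[of UNIV f] by (simp add: lebesgue_on_UNIV_eq)

lemma sets_lebesgue_if_borel: "S \<in> sets borel \<Longrightarrow> S \<in> sets lebesgue"
  using sets_completionI_sets[of S lborel] by simp

lemma continuous_on_e2pi_scaled [continuous_intros]:
  "continuous_on S (\<lambda>x. e2pi (c * x / p))"
proof -
  have "continuous_on S (\<lambda>x. e2pi (c / p * x))" by (intro continuous_intros)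
  then show ?thesis by simp
qed

inductive trig_poly :: "real \<Rightarrow> (real \<Rightarrow> complex) \<Rightarrow> bool" for p where
  monomial: "trig_poly p (\<lambda>x. c * e2pi (of_int k * x / p))"
| add: "trig_poly p f \<Longrightarrow> trig_poly p g \<Longrightarrow> trig_poly p (\<lambda>x. f x + g x)"

lemma trig_poly_const: "trig_poly p (\<lambda>x. c)"
  using trig_poly.monomial[of p c 0] by simp

lemma trig_poly_mult:
  assumes "trig_poly p f" "trig_poly p g"
  shows "trig_poly p (\<lambda>x. f x * g x)"
  using assms
proof (induction f rule: trig_poly.induct)
  case (monomial c k)
  from monomial.prems show ?case
  proof (induction g rule: trig_poly.induct)
    case (monomial d j)
    have "(\<lambda>x. c * e2pi (of_int k * x / p) * (d * e2pi (of_int j * x / p)))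
        = (\<lambda>x. (c * d) * e2pi (of_int (k + j) * x / p))"
      by (simp add: fun_eq_iff e2pi_add[symmetric] algebra_simps add_divide_distrib)
    then show ?case by (simp only: trig_poly.monomial)
  next
    case (add g1 g2)
    then show ?case by (simp add: distrib_left trig_poly.add)
  qed
next
  case (add f1 f2)
  then show ?case by (simp add: distrib_right trig_poly.add)
qed

lemma trig_poly_cnj:
  assumes "trig_poly p f"
  shows "trig_poly p (\<lambda>x. cnj (f x))"
  using assms
proof (induction f rule: trig_poly.induct)
  case (monomial c k)
  have "(\<lambda>x. cnj (c * e2pi (of_int k * x / p))) = (\<lambda>x. cnj c * e2pi (of_int (- k) * x / p))"
    by (simp add: fun_eq_iff cnj_e2pi)
  then show ?case by (simp only: trig_poly.monomial)
qed (simp add: trig_poly.add)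

lemma trig_poly_Re_Im:
  assumes "trig_poly p f"
  shows "trig_poly p (\<lambda>x. of_real (Re (f x)))" "trig_poly p (\<lambda>x. of_real (Im (f x)))"
proof -
  have "(\<lambda>x. of_real (Re (f x))) = (\<lambda>x. 1/2 * f x + 1/2 * cnj (f x))"
    "(\<lambda>x. of_real (Im (f x))) = (\<lambda>x. - \<i>/2 * f x + \<i>/2 * cnj (f x))"
    by (simp_all add: fun_eq_iff complex_eq_iff)
  moreover have "trig_poly p (\<lambda>x. a * f x + b * cnj (f x))" for a b
    by (intro trig_poly.add trig_poly_mult[OF trig_poly_const] assms trig_poly_cnj)
  ultimately show "trig_poly p (\<lambda>x. of_real (Re (f x)))" "trig_poly p (\<lambda>x. of_real (Im (f x)))"
    by (simp_all only:)
qed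

lemma trig_poly_real_polynomial:
  assumes "real_polynomial_function g"
  shows "trig_poly p (\<lambda>x. of_real (g (e2pi (x / p))))"
  using assms
proof (induction g rule: real_polynomial_function.induct)
  case (linear g)
  then interpret bounded_linear g .
  have g_eq: "g z = Re z * g 1 + Im z * g \<i>" for z
  proof -
    have "z = Re z *\<^sub>R 1 + Im z *\<^sub>R \<i>" by (simp add: complex_eq_iff)
    then have "g z = g (Re z *\<^sub>R 1 + Im z *\<^sub>R \<i>)" by (rule arg_cong)
    then show ?thesis by (simp only: add scale real_scaleR_def)
  qed
  have "(\<lambda>x. complex_of_real (g (e2pi (x / p)))) = (\<lambda>x. of_real (Re (e2pi (x / p))) * of_real (g 1)
      + of_real (Im (e2pi (x / p))) * of_real (g \<i>))"
    by (rule ext, subst g_eq) simp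
  moreover have "trig_poly p (\<lambda>x. e2pi (x / p))"
    using trig_poly.monomial[of p 1 1] by simp
  then have "trig_poly p (\<lambda>x. of_real (Re (e2pi (x / p))) * of_real (g 1)
      + of_real (Im (e2pi (x / p))) * of_real (g \<i>))"
    by (intro trig_poly.add trig_poly_mult trig_poly_Re_Im trig_poly_const)
  ultimately show ?case by (simp only:)
qed (simp_all add: trig_poly_const trig_poly.add trig_poly_mult)

lemma integral_mult_trig_poly_eq_0:
  fixes F :: "real \<Rightarrow> complex"
  assumes F: "integrable lebesgue F"
    and orth: "\<And>k::int. integral\<^sup>L lebesgue (\<lambda>x. F x * e2pi (of_int k * x / p)) = 0"
    and "trig_poly p h"
  shows "integrable lebesgue (\<lambda>x. F x * h x) \<and> integral\<^sup>L lebesgue (\<lambda>x. F x * h x) = 0"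
  using \<open>trig_poly p h\<close>
proof (induction h rule: trig_poly.induct)
  case (monomial c k)
  have "integrable lebesgue (\<lambda>x. F x * e2pi (of_int k * x / p))"
    using F borel_measurable_lebesgue_if_continuous[OF continuous_on_e2pi_scaled]
    by (intro Bochner_Integration.integrable_bound[OF F]) (auto simp: norm_mult)
  then show ?case using orth[of k] by (simp add: algebra_simps)
next
  case (add f g)
  then show ?case by (simp add: distrib_left)
qed

lemma sigma_finite_lebesgue: "sigma_finite_measure (lebesgue :: real measure)"
proof -
  have "x \<in> (\<Union>n::nat. {- real n..real n})" for x :: real
  proof -
    obtain n :: nat where "\<bar>x\<bar> \<le> real n" using real_arch_simple by blast
    then show ?thesis by (intro UN_I[of n]) auto
  qed
  then have cover: "(\<Union>n::nat. {- real n..real n}) = UNIV" by auto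
  have "emeasure lebesgue {- real n..real n} \<noteq> \<infinity>" for n
    using fmeasurableD2[OF lmeasurable_interval(1)[of "- real n" "real n"]] by simp
  with cover show ?thesis
    by (intro sigma_finite_measure.intro exI[of _ "range (\<lambda>n::nat. {- real n..real n})"]) auto
qed

lemma set_integral_borel_eq_0_if_closed_eq_0:
  fixes F :: "real \<Rightarrow> 'b::{banach, second_countable_topology}"
  assumes F: "integrable lebesgue F"
    and closed: "\<And>K. closed K \<Longrightarrow> (LINT x:K|lebesgue. F x) = 0"
    and "S \<in> sets borel"
  shows "(LINT x:S|lebesgue. F x) = 0"
proof -
  have integrable: "set_integrable lebesgue S F" if "S \<in> sets borel" for S
    unfolding set_integrable_def using sets_lebesgue_if_borel[OF that] F
    by (rule integrable_mult_indicator)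
  from \<open>S \<in> sets borel\<close> show ?thesis
  proof (induction rule: borel_set_induct)
    case (compl A)
    have "(LINT x:A \<union> - A|lebesgue. F x) = (LINT x:A|lebesgue. F x) + (LINT x:- A|lebesgue. F x)"
      using compl.hyps by (intro set_integral_Un integrable) auto
    then show ?case using closed[of UNIV] compl.IH by simp
  next
    case (union A)
    then have "(LINT x:(\<Union>i. A i)|lebesgue. F x) = (\<Sum>i. (LINT x:(A i)|lebesgue. F x))"
      by (intro lebesgue_integral_countable_add integrable sets_lebesgue_if_borel sets.countable_UN)
        (auto simp: disjoint_family_on_def)
    then show ?case using union.IH by simp
  qed (use closed in auto)
qed

lemma AE_eq_0_if_set_integral_closed_eq_0:
  fixes F :: "real \<Rightarrow> 'b::{banach, second_countable_topology}"
  assumes F: "integrable lebesgue F"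
    and closed: "\<And>K. closed K \<Longrightarrow> (LINT x:K|lebesgue. F x) = 0"
  shows "AE x in lebesgue. F x = 0"
proof (rule sigma_finite_measure.density_zero[OF sigma_finite_lebesgue F])
  fix S :: "real set" assume "S \<in> sets lebesgue"
  then obtain S' N N' where S: "S = S' \<union> N" "N \<subseteq> N'" "N' \<in> null_sets lborel" "S' \<in> sets borel"
    by (auto elim: sets_completionE)
  have "(LINT x:S|lebesgue. F x) = (LINT x:S'|lebesgue. F x)"
  proof (rule set_integral_cong_set)
    show "set_borel_measurable lebesgue S F" "set_borel_measurable lebesgue S' F"
      using \<open>S \<in> sets lebesgue\<close> sets_lebesgue_if_borel[OF S(4)] F
      by (auto simp: set_borel_measurable_def)
    show "AE x in lebesgue. x \<in> S' \<longleftrightarrow> x \<in> S"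
      using AE_completion[OF AE_not_in[OF S(3)]] by eventually_elim (use S in auto)
  qed
  also have "\<dots> = 0"
    using F closed S(4) by (rule set_integral_borel_eq_0_if_closed_eq_0)
  finally show "(LINT x:S|lebesgue. F x) = 0" .
qed

lemma borel_measurable_indicator_comp_scaleR:
  fixes F :: "'a \<Rightarrow> 'b::{banach, second_countable_topology}" and u :: "'a \<Rightarrow> 'c::topological_space"
  assumes "u \<in> borel_measurable M" "closed B" "integrable M F"
  shows "(\<lambda>x. indicator B (u x) *\<^sub>R F x) \<in> borel_measurable M"
proof -
  have "(\<lambda>x. indicator B (u x) :: real) \<in> borel_measurable M"
    using measurable_compose[OF assms(1) borel_measurable_indicator[OF borel_closed[OF assms(2)]]]
    by (simp add: o_def)
  then show ?thesis
    using borel_measurable_integrable[OF assms(3)] by (rule borel_measurable_scaleR)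
qed

lemma integral_polynomial_circle_eq_0:
  fixes F :: "real \<Rightarrow> complex"
  assumes F: "integrable lebesgue F"
    and orth: "\<And>k::int. integral\<^sup>L lebesgue (\<lambda>x. F x * e2pi (of_int k * x / p)) = 0"
    and "real_polynomial_function g"
  shows "integrable lebesgue (\<lambda>x. g (e2pi (x / p)) *\<^sub>R F x)"
    "(LINT x|lebesgue. g (e2pi (x / p)) *\<^sub>R F x) = 0"
proof -
  have "F x * of_real (g (e2pi (x / p))) = g (e2pi (x / p)) *\<^sub>R F x" for x
    by (simp add: scaleR_conv_of_real)
  moreover have "integrable lebesgue (\<lambda>x. F x * of_real (g (e2pi (x / p))))
      \<and> (LINT x|lebesgue. F x * of_real (g (e2pi (x / p)))) = 0"
    by (rule integral_mult_trig_poly_eq_0[OF F orth trig_poly_real_polynomial[OF assms(3)]])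
  ultimately show "integrable lebesgue (\<lambda>x. g (e2pi (x / p)) *\<^sub>R F x)"
    "(LINT x|lebesgue. g (e2pi (x / p)) *\<^sub>R F x) = 0"
    by simp_all
qed

lemma integral_continuous_circle_eq_0:
  fixes F :: "real \<Rightarrow> complex" and \<phi> :: "complex \<Rightarrow> real"
  assumes F: "integrable lebesgue F"
    and orth: "\<And>k::int. integral\<^sup>L lebesgue (\<lambda>x. F x * e2pi (of_int k * x / p)) = 0"
    and \<phi>: "continuous_on UNIV \<phi>"
  shows "(LINT x|lebesgue. \<phi> (e2pi (x / p)) *\<^sub>R F x) = 0"
proof -
  define u where "u x = e2pi (x / p)" for x
  have u: "continuous_on UNIV u" "u x \<in> sphere 0 1" for x
    unfolding u_def using continuous_on_e2pi_scaled[of UNIV 1 p] by auto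
  have "bounded (\<phi> ` sphere 0 1)"
    by (intro compact_imp_bounded compact_continuous_image continuous_on_subset[OF \<phi>]) auto
  then obtain B where "\<forall>z\<in>sphere 0 1. \<bar>\<phi> z\<bar> \<le> B"
    unfolding bounded_iff by auto
  then have integrable: "integrable lebesgue (\<lambda>x. \<phi> (u x) *\<^sub>R F x)"
    using F u by (intro integrable_scaleR_bounded borel_measurable_lebesgue_if_continuous
        continuous_on_compose2[OF \<phi> u(1)]) auto
  define I where "I = (LINT x|lebesgue. \<phi> (u x) *\<^sub>R F x)"
  define C where "C = (LINT x|lebesgue. norm (F x))"
  have "C \<ge> 0" unfolding C_def by simp
  have "norm I \<le> 0 + e" if "e > 0" for e
  proof -
    define \<delta> where "\<delta> = e / (C + 1)"
    have "\<delta> > 0" "\<delta> * C \<le> e"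
      unfolding \<delta>_def using \<open>C \<ge> 0\<close> \<open>e > 0\<close> by (simp_all add: field_simps)
    obtain g where g: "real_polynomial_function g" "\<And>z. z \<in> sphere 0 1 \<Longrightarrow> \<bar>\<phi> z - g z\<bar> < \<delta>"
      using Stone_Weierstrass_real_polynomial_function[OF compact_sphere
          continuous_on_subset[OF \<phi>] \<open>\<delta> > 0\<close>] by blast
    note g_int = integral_polynomial_circle_eq_0[OF F orth g(1), folded u_def]
    have "I = (LINT x|lebesgue. (\<phi> (u x) - g (u x)) *\<^sub>R F x)"
      unfolding I_def scaleR_left_diff_distrib
      using Bochner_Integration.integral_diff[OF integrable g_int(1)] g_int(2) by simp
    also have "norm \<dots> \<le> (LINT x|lebesgue. \<delta> * norm (F x))"
    proof (rule Bochner_Integration.integral_norm_bound_integral)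
      show "integrable lebesgue (\<lambda>x. (\<phi> (u x) - g (u x)) *\<^sub>R F x)"
        using integrable g_int(1) by (simp add: scaleR_left_diff_distrib)
      show "norm ((\<phi> (u x) - g (u x)) *\<^sub>R F x) \<le> \<delta> * norm (F x)" for x
        using g(2)[OF u(2), of x] by (simp add: mult_right_mono)
    qed (use F in simp)
    also have "\<dots> = \<delta> * C" unfolding C_def by simp
    finally show ?thesis using \<open>\<delta> * C \<le> e\<close> by simp
  qed
  then have "norm I \<le> 0" by (rule field_le_epsilon)
  then show ?thesis unfolding I_def u_def by simp
qed

lemma tendsto_infdist_cutoff_indicator:
  assumes "closed B" "B \<noteq> {}"
  shows "(\<lambda>n. max 0 (1 - real (Suc n) * infdist z B)) \<longlonglongrightarrow> indicator B z"
proof (cases "z \<in> B")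
  case False
  then have "infdist z B > 0"
    using in_closed_iff_infdist_zero[OF assms] infdist_nonneg[of z B] by simp
  then obtain M :: nat where M: "1 < real M * infdist z B"
    using reals_Archimedean3 by blast
  have "max 0 (1 - real (Suc n) * infdist z B) = 0" if "M \<le> n" for n
  proof -
    have "real M * infdist z B \<le> real (Suc n) * infdist z B"
      using that \<open>infdist z B > 0\<close> by (intro mult_right_mono) auto
    then show ?thesis using M by simp
  qed
  then have "(\<lambda>n. max 0 (1 - real (Suc n) * infdist z B)) \<longlonglongrightarrow> 0"
    by (intro tendsto_eventually eventually_sequentiallyI)
  then show ?thesis using False by simp
qed simp

lemma integral_closed_circle_eq_0:
  fixes F :: "real \<Rightarrow> complex" and B :: "complex set"
  assumes F: "integrable lebesgue F"
    and orth: "\<And>k::int. integral\<^sup>L lebesgue (\<lambda>x. F x * e2pi (of_int k * x / p)) = 0"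
    and "closed B"
  shows "(LINT x|lebesgue. indicator B (e2pi (x / p)) *\<^sub>R F x) = 0"
proof (cases "B = {}")
  case False
  define u where "u x = e2pi (x / p)" for x
  have u: "u \<in> borel_measurable lebesgue"
    unfolding u_def using continuous_on_e2pi_scaled[of UNIV 1 p]
    by (intro borel_measurable_lebesgue_if_continuous) simp
  define \<phi> where "\<phi> n z = max 0 (1 - real (Suc n) * infdist z B)" for n z
  have \<phi>_cont: "continuous_on UNIV (\<phi> n)" for n
    unfolding \<phi>_def by (intro continuous_intros continuous_on_infdist continuous_on_id)
  have "(\<lambda>n. LINT x|lebesgue. \<phi> n (u x) *\<^sub>R F x)
      \<longlonglongrightarrow> (LINT x|lebesgue. indicator B (u x) *\<^sub>R F x)"
  proof (rule integral_dominated_convergence[where w = "\<lambda>x. norm (F x)"])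
    show "(\<lambda>x. indicator B (u x) *\<^sub>R F x) \<in> borel_measurable lebesgue"
      using u \<open>closed B\<close> F by (rule borel_measurable_indicator_comp_scaleR)
    show "(\<lambda>x. \<phi> n (u x) *\<^sub>R F x) \<in> borel_measurable lebesgue" for n
      using measurable_compose[OF u borel_measurable_continuous_onI[OF \<phi>_cont]]
        borel_measurable_integrable[OF F] by (simp add: o_def)
    show "AE x in lebesgue. norm (\<phi> n (u x) *\<^sub>R F x) \<le> norm (F x)" for n
      by (simp add: \<phi>_def infdist_nonneg mult_left_le_one_le)
    show "AE x in lebesgue. (\<lambda>n. \<phi> n (u x) *\<^sub>R F x) \<longlonglongrightarrow> indicator B (u x) *\<^sub>R F x"
      unfolding \<phi>_def using tendsto_infdist_cutoff_indicator[OF \<open>closed B\<close> False]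
      by (intro AE_I2 tendsto_scaleR tendsto_const)
  qed (use F in simp)
  moreover have "(LINT x|lebesgue. \<phi> n (u x) *\<^sub>R F x) = 0" for n
    unfolding u_def by (rule integral_continuous_circle_eq_0[OF F orth \<phi>_cont])
  ultimately show ?thesis
    unfolding u_def using LIMSEQ_unique[OF tendsto_const] by fastforce
qed simp

lemma set_integral_closed_eq_0_if_injective:
  fixes F :: "real \<Rightarrow> complex" and u :: "real \<Rightarrow> complex"
  assumes F: "integrable lebesgue F"
    and vanish: "\<And>x. x \<notin> \<Omega> \<Longrightarrow> F x = 0"
    and "\<Omega> \<subseteq> C" "compact C" "continuous_on UNIV u" "Z \<in> null_sets lborel"
    and inj: "\<And>x y. x \<in> \<Omega> - Z \<Longrightarrow> y \<in> C \<Longrightarrow> u x = u y \<Longrightarrow> x = y"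
    and orth: "\<And>B. closed B \<Longrightarrow> (LINT x|lebesgue. indicator B (u x) *\<^sub>R F x) = 0"
    and "closed K"
  shows "(LINT x:K|lebesgue. F x) = 0"
proof -
  define B where "B = u ` (K \<inter> C)"
  have "compact B"
    unfolding B_def using assms(4,5,9)
    by (intro compact_continuous_image continuous_on_subset[OF assms(5)] closed_Int_compact) auto
  have "(LINT x:K|lebesgue. F x) = (LINT x|lebesgue. indicator B (u x) *\<^sub>R F x)"
    unfolding set_lebesgue_integral_def
  proof (rule integral_cong_AE)
    show "(\<lambda>x. indicator B (u x) *\<^sub>R F x) \<in> borel_measurable lebesgue"
      using borel_measurable_lebesgue_if_continuous[OF assms(5)] compact_imp_closed[OF \<open>compact B\<close>] F
      by (rule borel_measurable_indicator_comp_scaleR)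
    show "(\<lambda>x. indicator K x *\<^sub>R F x) \<in> borel_measurable lebesgue"
      using borel_measurable_integrable[OF F] sets_lebesgue_if_borel[OF borel_closed[OF \<open>closed K\<close>]]
      by (intro borel_measurable_scaleR borel_measurable_indicator)
    show "AE x in lebesgue. indicator K x *\<^sub>R F x = indicator B (u x) *\<^sub>R F x"
      using AE_completion[OF AE_not_in[OF \<open>Z \<in> null_sets lborel\<close>]]
    proof eventually_elim
      case (elim x)
      show ?case
      proof (cases "x \<in> \<Omega>")
        case True
        then have "x \<in> K \<longleftrightarrow> u x \<in> B"
          using inj[of x] elim \<open>\<Omega> \<subseteq> C\<close> unfolding B_def by auto
        then show ?thesis by (simp add: indicator_def)
      qed (simp add: vanish)
    qed
  qed
  also have "\<dots> = 0"
    using orth compact_imp_closed[OF \<open>compact B\<close>] by simp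
  finally show ?thesis .
qed

section \<open>The spectrum of Omega\<close>

definition Omega :: "nat set \<Rightarrow> real set" where
  "Omega A = (\<Union>a\<in>A. {real a..<real a + 1})"

lemma Omega_lmeasurable: "finite A \<Longrightarrow> Omega A \<in> lmeasurable"
  unfolding Omega_def by (intro bounded_set_imp_lmeasurable sets.finite_UN bounded_UN) auto

lemma sets_lebesgue_Omega: "finite A \<Longrightarrow> Omega A \<in> sets lebesgue"
  using Omega_lmeasurable by (rule fmeasurableD)

lemma e2pi_eq_imp_eq_Omega:
  assumes inj: "inj_on (\<lambda>a. a mod N) A" and "N > 0"
    and x: "x \<in> Omega A" "x \<notin> real ` A"
    and y: "b \<in> A" "real b \<le> y" "y \<le> real b + 1"
    and eq: "e2pi (x / N) = e2pi (y / N)"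
  shows "x = y"
proof -
  obtain a where a: "a \<in> A" "real a \<le> x" "x < real a + 1"
    using x(1) unfolding Omega_def by auto
  with x(2) have "real a < x" by (metis image_eqI order_le_less)
  obtain m :: int where "x / N - y / N = of_int m"
    using eq by (auto simp: e2pi_eq_iff elim!: Ints_cases)
  then have m: "x = y + of_int (int N * m)"
    using \<open>N > 0\<close> by (simp add: field_simps)
  have "y \<notin> \<int>"
  proof
    assume "y \<in> \<int>"
    then have "x \<in> \<int>" using m by simp
    then obtain k where "x = of_int k" by (auto elim: Ints_cases)
    then have "real_of_int (int a) < of_int k" "real_of_int k < of_int (int a + 1)"
      using \<open>real a < x\<close> \<open>x < real a + 1\<close> by simp_all
    then show False by (simp only: of_int_less_iff)
  qed
  then have "real b < y" "y < real b + 1"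
    using y(2,3) by (auto simp: order_le_less)
  then have "\<lfloor>y\<rfloor> = int b" by (simp add: floor_eq_iff)
  moreover have "\<lfloor>x\<rfloor> = int a" using a by (simp add: floor_eq_iff)
  moreover have "\<lfloor>x\<rfloor> = \<lfloor>y\<rfloor> + int N * m"
    unfolding m by (rule floor_add_int[symmetric])
  ultimately have ab: "int a = int b + int N * m" by simp
  then have "int a mod int N = int b mod int N" by simp
  then have "a mod N = b mod N" by (metis of_nat_eq_iff zmod_int)
  then have "a = b" using inj_onD[OF inj] a(1) y(1) by blast
  then show "x = y" using ab m \<open>N > 0\<close> by simp
qed

lemma has_integral_e2pi_unit_interval:
  assumes "c \<noteq> 0"
  shows "((\<lambda>x. e2pi (c * x)) has_integral e2pi (c * b) * (e2pi c - 1) / (2 * pi * \<i> * c)) {b..<b + 1}"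
proof -
  define w where "w = 2 * pi * \<i> * complex_of_real c"
  have "w \<noteq> 0" unfolding w_def using assms by simp
  have e2pi_w: "(\<lambda>x. e2pi (c * x) / w) = (\<lambda>x. exp (of_real x * w) / w)"
    unfolding e2pi_def w_def by (simp add: algebra_simps)
  have "((\<lambda>x. e2pi (c * x) / w) has_vector_derivative e2pi (c * x)) (at x within {b..b + 1})"
    for x
  proof -
    have "((\<lambda>x. exp (of_real x * w) / w) has_vector_derivative exp (of_real x * w))
        (at x within {b..b + 1})"
      using \<open>w \<noteq> 0\<close> by (intro has_vector_derivative_real_field) (auto intro!: derivative_eq_intros)
    moreover have "exp (of_real x * w) = e2pi (c * x)"
      unfolding e2pi_def w_def by (simp add: algebra_simps)
    ultimately show ?thesis unfolding e2pi_w by simp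
  qed
  then have "((\<lambda>x. e2pi (c * x)) has_integral (e2pi (c * (b + 1)) / w - e2pi (c * b) / w)) {b..b + 1}"
    by (intro fundamental_theorem_of_calculus) auto
  moreover have "e2pi (c * (b + 1)) / w - e2pi (c * b) / w = e2pi (c * b) * (e2pi c - 1) / w"
    by (simp add: distrib_left e2pi_add algebra_simps diff_divide_distrib)
  ultimately have closed_interval:
    "((\<lambda>x. e2pi (c * x)) has_integral e2pi (c * b) * (e2pi c - 1) / w) {b..b + 1}"
    by simp
  have "negligible {x \<in> {b..b + 1} - {b..<b + 1}. e2pi (c * x) \<noteq> 0}"
    by (rule negligible_subset[of "{b + 1}"]) auto
  moreover have "negligible {x \<in> {b..<b + 1} - {b..b + 1}. e2pi (c * x) \<noteq> 0}"
    by (rule negligible_subset[of "{}"]) auto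
  ultimately have "((\<lambda>x. e2pi (c * x)) has_integral e2pi (c * b) * (e2pi c - 1) / w) {b..<b + 1}"
    using closed_interval by (rule iffD1[OF has_integral_spike_set_eq])
  then show ?thesis unfolding w_def .
qed

lemma sum_power_complete_residues:
  fixes w :: "'a::comm_semiring_1"
  assumes "bij_betw (\<lambda>a. a mod N) A {..<N}" "w ^ N = 1"
  shows "(\<Sum>a\<in>A. w ^ a) = (\<Sum>r<N. w ^ r)"
proof -
  have "w ^ a = w ^ (a mod N)" for a
  proof -
    have "w ^ a = (w ^ N) ^ (a div N) * w ^ (a mod N)"
      by (simp flip: power_mult power_add)
    then show ?thesis using assms(2) by simp
  qed
  then show ?thesis
    using sum.reindex_bij_betw[OF assms(1), of "\<lambda>r. w ^ r"] by simp
qed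

lemma integral_e2pi_Omega_eq_0:
  assumes "finite A" "N > 0" "bij_betw (\<lambda>a. a mod N) A {..<N}" "j \<noteq> 0"
  shows "integral\<^sup>L (lebesgue_on (Omega A)) (\<lambda>x. e2pi (of_int j * x / N)) = 0"
proof -
  define c where "c = of_int j / N"
  have "c \<noteq> 0" unfolding c_def using assms(2,4) by simp
  define w where "w = e2pi c"
  have "w ^ N = 1"
    unfolding w_def c_def using assms(2) by (simp flip: e2pi_of_nat_mult add: e2pi_eq_1_iff)
  have "((\<lambda>x. e2pi (c * x)) has_integral (\<Sum>a\<in>A. e2pi (c * a) * (w - 1) / (2 * pi * \<i> * c)))
      (Omega A)"
    unfolding Omega_def w_def using assms(1)
    by (intro has_integral_UN has_integral_e2pi_unit_interval \<open>c \<noteq> 0\<close>)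
      (auto simp: pairwise_def intro: negligible_subset[of "{}"])
  moreover have "e2pi (c * a) = w ^ a" for a :: nat
    unfolding w_def by (simp add: e2pi_of_nat_mult[symmetric] mult.commute)
  then have "(\<Sum>a\<in>A. e2pi (c * a) * (w - 1) / (2 * pi * \<i> * c))
      = (\<Sum>r<N. w ^ r) * (w - 1) / (2 * pi * \<i> * c)"
    unfolding sum_power_complete_residues[OF assms(3) \<open>w ^ N = 1\<close>, symmetric]
    by (simp add: sum_distrib_right sum_divide_distrib)
  moreover have "(\<Sum>r<N. w ^ r) * (w - 1) = 0"
    using \<open>w ^ N = 1\<close> by (simp add: power_diff_1_eq[symmetric] atLeast0LessThan mult.commute)
  ultimately have HK: "integral (Omega A) (\<lambda>x. e2pi (c * x)) = 0"
    by (simp add: integral_unique)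
  have integrable: "integrable (lebesgue_on (Omega A)) (\<lambda>x. e2pi (c * x))"
    using continuous_on_e2pi_scaled[of _ c 1] assms(1)
    by (intro finite_measure.integrable_const_bound[OF finite_measure_lebesgue_on[OF Omega_lmeasurable]]
        continuous_imp_measurable_on_sets_lebesgue sets_lebesgue_Omega) auto
  have "integral\<^sup>L (lebesgue_on (Omega A)) (\<lambda>x. e2pi (c * x)) = 0"
    using lebesgue_integral_eq_integral[OF integrable sets_lebesgue_Omega[OF assms(1)]] HK
    by (rule trans)
  moreover have "(\<lambda>x. e2pi (of_int j * x / N)) = (\<lambda>x. e2pi (c * x))"
    by (simp add: c_def)
  ultimately show ?thesis by simp
qed

lemma L2_on_expo:
  assumes "S \<in> lmeasurable"
  shows "L2_on S (expo l)"
  unfolding L2_on_def expo_eq_e2pi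
proof
  show "(\<lambda>x. e2pi (l * x)) \<in> borel_measurable (lebesgue_on S)"
    using assms continuous_on_e2pi_scaled[of _ l 1]
    by (intro continuous_imp_measurable_on_sets_lebesgue fmeasurableD) auto
  show "integrable (lebesgue_on S) (\<lambda>x. (norm (e2pi (l * x)))\<^sup>2)"
    using finite_measure.integrable_const[OF finite_measure_lebesgue_on[OF assms]] by simp
qed

lemma not_AE_expo_eq_0:
  assumes "S \<in> sets lebesgue" "\<not> negligible S"
  shows "\<not> (AE x in lebesgue_on S. expo l x = 0)"
proof
  assume "AE x in lebesgue_on S. expo l x = 0"
  then have "AE x in lebesgue. x \<notin> S"
    using assms(1) by (simp add: AE_restrict_space_iff expo_eq_e2pi)
  then have "S \<in> null_sets lebesgue"
    using assms(1) by (simp add: AE_iff_null_sets)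
  with assms(2) show False
    by (simp add: negligible_iff_null_sets)
qed

lemma L2_inner_expo_Omega:
  assumes "finite A" "N > 0" "bij_betw (\<lambda>a. a mod N) A {..<N}" "k \<noteq> m"
  shows "L2_inner (Omega A) (expo (of_int k / N)) (expo (of_int m / N)) = 0"
proof -
  have eq: "(\<lambda>x. expo (of_int k / N) x * cnj (expo (of_int m / N) x))
      = (\<lambda>x. e2pi (of_int (k - m) * x / N))"
    by (simp add: fun_eq_iff expo_eq_e2pi cnj_e2pi e2pi_add[symmetric] algebra_simps
        diff_divide_distrib)
  show ?thesis
    unfolding L2_inner_def eq using assms(4) by (intro integral_e2pi_Omega_eq_0[OF assms(1-3)]) simp
qed

lemma Omega_exponentials_complete:
  assumes "finite A" "N > 0" "inj_on (\<lambda>a. a mod N) A"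
    and f: "L2_on (Omega A) f"
    and orth: "\<And>k::int. L2_inner (Omega A) f (expo (of_int k / N)) = 0"
  shows "AE x in lebesgue_on (Omega A). f x = 0"
proof -
  have sets: "Omega A \<inter> space lebesgue \<in> sets lebesgue"
    using sets_lebesgue_Omega[OF assms(1)] by simp
  define F where "F x = indicator (Omega A) x *\<^sub>R f x" for x
  have "integrable (lebesgue_on (Omega A)) f"
    using f finite_measure_lebesgue_on[OF Omega_lmeasurable[OF assms(1)]]
    unfolding L2_on_def by (blast intro: integrable_if_square_integrable)
  then have F: "integrable lebesgue F"
    unfolding F_def by (simp add: integrable_restrict_space[OF sets, symmetric])
  have orth_F: "integral\<^sup>L lebesgue (\<lambda>x. F x * e2pi (of_int k * x / N)) = 0" for k :: int
  proof -
    have "L2_inner (Omega A) f (expo (of_int (- k) / N))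
        = integral\<^sup>L lebesgue (\<lambda>x. indicator (Omega A) x *\<^sub>R (f x * cnj (expo (of_int (- k) / N) x)))"
      unfolding L2_inner_def by (rule integral_restrict_space[OF sets])
    also have "\<dots> = integral\<^sup>L lebesgue (\<lambda>x. F x * e2pi (of_int k * x / N))"
      by (simp add: F_def expo_eq_e2pi cnj_e2pi)
    finally show ?thesis using orth[of "- k"] by simp
  qed
  have "(LINT x:K|lebesgue. F x) = 0" if "closed K" for K
  proof (rule set_integral_closed_eq_0_if_injective[OF F])
    show "F x = 0" if "x \<notin> Omega A" for x
      using that by (simp add: F_def)
    show "Omega A \<subseteq> (\<Union>b\<in>A. {real b..real b + 1})" "compact (\<Union>b\<in>A. {real b..real b + 1})"
      unfolding Omega_def using assms(1) by auto
    show "continuous_on UNIV (\<lambda>x. e2pi (x / N))"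
      using continuous_on_e2pi_scaled[of UNIV 1 N] by simp
    show "real ` A \<in> null_sets lborel"
      using assms(1) by (simp add: finite_imp_null_set_lborel)
    show "x = y" if "x \<in> Omega A - real ` A" "y \<in> (\<Union>b\<in>A. {real b..real b + 1})"
      and "e2pi (x / N) = e2pi (y / N)" for x y
      using that e2pi_eq_imp_eq_Omega[OF assms(3,2)] by auto
    show "(LINT x|lebesgue. indicator B (e2pi (x / N)) *\<^sub>R F x) = 0" if "closed B" for B
      using F orth_F that by (rule integral_closed_circle_eq_0)
  qed fact
  then have "AE x in lebesgue. F x = 0"
    by (rule AE_eq_0_if_set_integral_closed_eq_0[OF F])
  then show ?thesis
    unfolding AE_restrict_space_iff[OF sets] by eventually_elim (simp add: F_def indicator_def)
qed

lemma spectrum_of_Omega: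
  assumes "finite A" "N > 0" "bij_betw (\<lambda>a. a mod N) A {..<N}"
  shows "spectrum_of (Omega A) (range (\<lambda>k::int. of_int k / N))"
proof -
  obtain a where "a \<in> A"
    using assms(2,3) by (metis bij_betw_imp_surj_on imageE lessThan_iff)
  then have "{real a..real a + 1/2} \<subseteq> Omega A"
    unfolding Omega_def by force
  then have "\<not> negligible (Omega A)"
    using negligible_subset negligible_interval(1)[of "real a" "real a + 1/2"] by (auto simp: cbox_interval)
  then show ?thesis
    unfolding spectrum_of_def
    using L2_on_expo[OF Omega_lmeasurable] not_AE_expo_eq_0[OF sets_lebesgue_Omega]
      L2_inner_expo_Omega[OF assms] assms(1,2) bij_betw_imp_inj_on[OF assms(3)]
      Omega_exponentials_complete
    by auto
qed

theorem mainTheorem8: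
  fixes A :: "nat set" and N :: nat
  assumes "finite A" and "0 \<in> A" and "N = card A" and "N \<ge> 2"
    and "poly_has_spectrum A N"
    and "real (card {x::complex. cmod x = 1 \<and> gen_poly A x = 0}) < 3 * real N / 2 - 1"
  shows "(\<lambda>a. a mod N) ` A = {0..<N} \<and>
         (\<forall>z::int. \<exists>!p::int \<times> int. fst p \<in> int ` A \<and> z = fst p + int N * snd p) \<and>
         spectrum_of (\<Union>a\<in>A. {real a..<real a + 1}) (range (\<lambda>k::int. real_of_int k / real N))"
proof -
  have residues: "(\<lambda>a. a mod N) ` A = {0..<N}"
    using assms by (rule residues_complete_if_few_unimodular_roots)
  have "N > 0" using \<open>N \<ge> 2\<close> by simp
  have bij: "bij_betw (\<lambda>a. a mod N) A {..<N}"
    using assms(1,3) residues by (rule bij_betw_mod_if_residues_complete)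
  show ?thesis
    using residues tiling_if_complete_residues[OF \<open>N > 0\<close> bij]
      spectrum_of_Omega[OF assms(1) \<open>N > 0\<close> bij] unfolding Omega_def by blast
qed

end
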